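(* Let $G$ be an irreducible complex algebraic group, $D$ a Zariski dense subgroup of $G$, and $A$ a finitely generated free abelian group. Assume $D$ acts on $A$ via a homomorphism $D\to\mathrm{GL}(A)$ such that this action extends to a rational representation of $G$ on $A\otimes\mathbb{C}$. Let $\mathfrak{X}\subset A\setminus\{0\}$ be the set of all elements $a$ not contained in any proper $G$-invariant subspace of $A\otimes\mathbb{C}$. Then the action of $D$ on $A$ possesses the subgroup displacement property with respect to $\mathfrak{X}$.
   Context: Let $r=\mathrm{rank}(A)$. An action of $D$ on $A$ has the subgroup displacement property with respect to $\mathfrak{X}\subset A\setminus\{0\}$ if for every subgroup $B\subset A$ with $\mathrm{rank}(B)<r$ and every finite subset $X\subset\mathfrak{X}$ there is $g\in D$ such that $g(B)\cap X=\emptyset$. *)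

theory Defs
  imports "HOL-Analysis.Analysis"
begin

text \<open>Linear algebraic groups are modelled as Zariski closed subgroups of GL_n(C),
  matrices being complex^'n^'n.  The coordinate ring of GL_n(C) is generated by the
  matrix entries and the inverse of the determinant.\<close>

definition GL :: "(complex^'n^'n) set" where
  "GL = {M. det M \<noteq> 0}"

inductive_set regfun :: "(complex^'n^'n \<Rightarrow> complex) set" where
  rf_const: "(\<lambda>M. c) \<in> regfun"
| rf_entry: "(\<lambda>M. M $ i $ j) \<in> regfun"
| rf_invdet: "(\<lambda>M. inverse (det M)) \<in> regfun"
| rf_add: "f \<in> regfun \<Longrightarrow> g \<in> regfun \<Longrightarrow> (\<lambda>M. f M + g M) \<in> regfun"
| rf_mult: "f \<in> regfun \<Longrightarrow> g \<in> regfun \<Longrightarrow> (\<lambda>M. f M * g M) \<in> regfun"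

definition zariski_closed :: "(complex^'n^'n) set \<Rightarrow> bool" where
  "zariski_closed S \<longleftrightarrow> (\<exists>F \<subseteq> regfun. S = {M \<in> GL. \<forall>f\<in>F. f M = 0})"

definition zariski_closure :: "(complex^'n^'n) set \<Rightarrow> (complex^'n^'n) set" where
  "zariski_closure S = \<Inter>{Z. zariski_closed Z \<and> S \<subseteq> Z}"

definition matrix_subgroup :: "(complex^'n^'n) set \<Rightarrow> bool" where
  "matrix_subgroup H \<longleftrightarrow> H \<subseteq> GL \<and> mat 1 \<in> H \<and>
     (\<forall>g\<in>H. \<forall>h\<in>H. g ** h \<in> H) \<and> (\<forall>g\<in>H. \<exists>h\<in>H. g ** h = mat 1)"

definition algebraic_group :: "(complex^'n^'n) set \<Rightarrow> bool" where
  "algebraic_group G \<longleftrightarrow> matrix_subgroup G \<and> zariski_closed G"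

definition irreducible_variety :: "(complex^'n^'n) set \<Rightarrow> bool" where
  "irreducible_variety G \<longleftrightarrow> G \<noteq> {} \<and>
     (\<forall>Z1 Z2. zariski_closed Z1 \<longrightarrow> zariski_closed Z2 \<longrightarrow> G \<subseteq> Z1 \<union> Z2 \<longrightarrow> G \<subseteq> Z1 \<or> G \<subseteq> Z2)"

definition rational_rep :: "(complex^'n^'n) set \<Rightarrow> (complex^'n^'n \<Rightarrow> complex^'r^'r) \<Rightarrow> bool" where
  "rational_rep G \<rho> \<longleftrightarrow> (\<forall>g\<in>G. \<rho> g \<in> GL) \<and> (\<forall>g\<in>G. \<forall>h\<in>G. \<rho> (g ** h) = \<rho> g ** \<rho> h) \<and>
     (\<forall>i j. \<exists>f\<in>regfun. \<forall>g\<in>G. f g = \<rho> g $ i $ j)"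

text \<open>The lattice A = Z^r and its embedding into A \<otimes> C = C^r.\<close>
definition emb :: "int^'r \<Rightarrow> complex^'r" where
  "emb a = (\<chi> i. of_int (a $ i))"

definition add_subgroup :: "(int^'r) set \<Rightarrow> bool" where
  "add_subgroup B \<longleftrightarrow> 0 \<in> B \<and> (\<forall>x\<in>B. \<forall>y\<in>B. x + y \<in> B) \<and> (\<forall>x\<in>B. - x \<in> B)"

definition int_independent :: "(int^'r) set \<Rightarrow> bool" where
  "int_independent S \<longleftrightarrow> finite S \<and>
     (\<forall>c. (\<Sum>s\<in>S. c s *s s) = 0 \<longrightarrow> (\<forall>s\<in>S. c s = 0))"

definition int_rank :: "(int^'r) set \<Rightarrow> nat" where
  "int_rank B = Sup {card S | S. S \<subseteq> B \<and> int_independent S}"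

definition csubspace :: "(complex^'r) set \<Rightarrow> bool" where
  "csubspace W \<longleftrightarrow> 0 \<in> W \<and> (\<forall>x\<in>W. \<forall>y\<in>W. x + y \<in> W) \<and> (\<forall>c::complex. \<forall>x\<in>W. c *s x \<in> W)"

definition frakX :: "(complex^'n^'n) set \<Rightarrow> (complex^'n^'n \<Rightarrow> complex^'r^'r) \<Rightarrow> (int^'r) set" where
  "frakX G \<rho> = {a. a \<noteq> 0 \<and> (\<forall>W. csubspace W \<longrightarrow> W \<noteq> UNIV \<longrightarrow>
       (\<forall>g\<in>G. \<forall>w\<in>W. \<rho> g *v w \<in> W) \<longrightarrow> emb a \<notin> W)}"

definition subgroup_displacement ::
  "(complex^'n^'n) set \<Rightarrow> (complex^'n^'n \<Rightarrow> complex^'r^'r) \<Rightarrow> (int^'r) set \<Rightarrow> bool" where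
  "subgroup_displacement D \<rho> XX \<longleftrightarrow>
     (\<forall>B X. add_subgroup B \<longrightarrow> int_rank B < CARD('r) \<longrightarrow> finite X \<longrightarrow> X \<subseteq> XX \<longrightarrow>
        (\<exists>g\<in>D. \<forall>b\<in>B. \<forall>x\<in>X. \<rho> g *v emb b \<noteq> emb x))"

end

theory Submission imports Defs begin

(* Since rank B < rank A, the complex span of B is proper, so some nonzero linear form c kills B.
   If no d in D displaced B off the finite set X, then (applying this to inverses) for every h in D
   some x in X would satisfy c(rho(h) x) = 0.  So the product over x in X of the regular functions
   h |-> c(rho(h) x) vanishes on D, hence on its Zariski closure G, and by irreducibility one factor
   vanishes on all of G.  But then {w. c(rho(G) w) = 0} is a proper G-invariant subspace containing
   x, contradicting x in frakX. *)

definition of_int_vec :: "int^'r \<Rightarrow> 'a::ring_1^'r" where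
  "of_int_vec a = (\<chi> i. of_int (a $ i))"

lemma emb_eq_of_int_vec: "emb = of_int_vec"
  by (simp add: fun_eq_iff emb_def of_int_vec_def)

lemma inj_of_int_vec: "inj (of_int_vec :: int^'r \<Rightarrow> 'a::ring_char_0^'r)"
  by (auto simp: inj_def of_int_vec_def vec_eq_iff)

lemma of_int_vec_0 [simp]: "of_int_vec 0 = 0"
  by (simp add: of_int_vec_def vec_eq_iff)

lemma of_int_vec_sum_scale:
  "of_int_vec (\<Sum>s\<in>S. c s *s s) = (\<Sum>s\<in>S. of_int (c s) *s (of_int_vec s :: 'a::ring_1^'r))"
  by (simp add: of_int_vec_def vec_eq_iff sum_component)

lemma rat_common_denominator:
  fixes w :: "'a \<Rightarrow> rat"
  assumes "finite S"
  obtains N :: rat where "N \<noteq> 0" and "\<And>s. s \<in> S \<Longrightarrow> N * w s \<in> \<int>"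
proof
  define num where "num s = fst (quotient_of (w s))" for s
  define den where "den s = snd (quotient_of (w s))" for s
  have den_pos: "den s > 0" for s
    unfolding den_def by (rule quotient_of_denom_pos')
  have w_eq: "w s = of_int (num s) / of_int (den s)" for s
    unfolding num_def den_def by (rule quotient_of_div) simp
  show "(\<Prod>t\<in>S. of_int (den t)) \<noteq> (0::rat)"
    using den_pos by (simp add: assms less_imp_neq[symmetric])
  fix s assume "s \<in> S"
  then have eq: "(\<Prod>t\<in>S. of_int (den t)) * w s = of_int ((\<Prod>t\<in>S - {s}. den t) * num s)"
    using prod.remove[OF assms, of s "\<lambda>t. of_int (den t) :: rat"] den_pos[of s]
    by (simp add: w_eq field_simps)
  show "(\<Prod>t\<in>S. of_int (den t)) * w s \<in> \<int>"
    unfolding eq by (rule Ints_of_int)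
qed

(* Clearing denominators turns a rational dependency into an integral one. *)
lemma int_independent_imp_independent_rat:
  assumes "int_independent S"
  shows "vec.independent (of_int_vec ` S :: (rat^'r) set)"
proof (rule vec.independent_if_scalars_zero)
  have fin: "finite S" and indep: "\<And>c. (\<Sum>s\<in>S. c s *s s) = 0 \<Longrightarrow> \<forall>s\<in>S. c s = 0"
    using assms by (auto simp: int_independent_def)
  then show "finite (of_int_vec ` S :: (rat^'r) set)"
    by blast
  fix f :: "rat^'r \<Rightarrow> rat" and v :: "rat^'r"
  assume sum0: "(\<Sum>v\<in>of_int_vec ` S. f v *s v) = 0" and v: "v \<in> of_int_vec ` S"
  have inj: "inj_on (of_int_vec :: int^'r \<Rightarrow> rat^'r) S"
    using inj_of_int_vec by (rule inj_on_subset) simp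
  obtain N where N: "N \<noteq> 0" "\<And>s. s \<in> S \<Longrightarrow> N * f (of_int_vec s) \<in> \<int>"
    using rat_common_denominator[OF fin, where w="\<lambda>s. f (of_int_vec s)"] by blast
  define c where "c s = (THE k. of_int k = N * f (of_int_vec s))" for s
  have c: "of_int (c s) = N * f (of_int_vec s)" if "s \<in> S" for s
    using N(2)[OF that] unfolding c_def by (elim Ints_cases) simp
  have "(of_int_vec (\<Sum>s\<in>S. c s *s s) :: rat^'r) = (\<Sum>s\<in>S. of_int (c s) *s of_int_vec s)"
    by (rule of_int_vec_sum_scale)
  also have "\<dots> = (\<Sum>s\<in>S. N *s (f (of_int_vec s) *s of_int_vec s))"
    by (rule sum.cong) (simp_all add: c)
  also have "\<dots> = N *s (\<Sum>v\<in>of_int_vec ` S. f v *s v)"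
    by (simp add: vec.scale_sum_right sum.reindex[OF inj])
  also have "\<dots> = 0"
    using sum0 by simp
  finally have "(\<Sum>s\<in>S. c s *s s) = 0"
    using injD[OF inj_of_int_vec[where 'a=rat]] by (metis of_int_vec_0)
  moreover obtain s where "s \<in> S" "v = of_int_vec s"
    using v by blast
  ultimately show "f v = 0"
    using indep c N(1) by fastforce
qed

lemma int_independent_card_le:
  fixes S :: "(int^'r) set"
  assumes "int_independent S"
  shows "card S \<le> CARD('r)"
proof -
  have "card S = card (of_int_vec ` S :: (rat^'r) set)"
    using inj_of_int_vec by (metis card_image inj_on_subset subset_UNIV)
  also have "\<dots> \<le> vec.dim (UNIV :: (rat^'r) set)"
    using int_independent_imp_independent_rat[OF assms] by (rule vec.independent_card_le_dim[OF subset_UNIV])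
  also have "\<dots> = CARD('r)"
    by (rule vec_dim_card)
  finally show ?thesis .
qed

lemma bdd_above_card_int_independent:
  "bdd_above {card S | S. S \<subseteq> (B :: (int^'r) set) \<and> int_independent S}"
  by (rule bdd_aboveI[where M="CARD('r)"]) (auto intro: int_independent_card_le)

lemma independent_of_int_vec_imp_int_independent:
  assumes "finite S" and "vec.independent (of_int_vec ` S :: ('a::field_char_0^'r) set)"
  shows "int_independent S"
  unfolding int_independent_def
proof (intro conjI assms(1) allI impI ballI)
  fix c s assume c: "(\<Sum>s\<in>S. c s *s s) = 0" and s: "s \<in> S"
  have inj: "inj_on (of_int_vec :: int^'r \<Rightarrow> 'a^'r) S"
    using inj_of_int_vec by (rule inj_on_subset) simp
  define u where "u v = (of_int (c (the_inv_into S of_int_vec v)) :: 'a)" for v :: "'a^'r"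
  have "(\<Sum>v\<in>of_int_vec ` S. u v *s v) = (\<Sum>t\<in>S. of_int (c t) *s (of_int_vec t :: 'a^'r))"
    by (simp add: sum.reindex[OF inj] u_def the_inv_into_f_f[OF inj])
  also have "\<dots> = of_int_vec (\<Sum>t\<in>S. c t *s t)"
    by (rule of_int_vec_sum_scale[symmetric])
  also have "\<dots> = 0"
    using c by simp
  finally have "u (of_int_vec s) = 0"
    using assms s vec.dependent_finite[of "of_int_vec ` S :: ('a^'r) set"] by blast
  then show "c s = 0"
    by (simp add: u_def the_inv_into_f_f[OF inj s])
qed

lemma dim_emb_le_int_rank: "vec.dim (emb ` B) \<le> int_rank B"
proof -
  obtain E where E: "E \<subseteq> emb ` B" "vec.independent E" "emb ` B \<subseteq> vec.span E"
    "card E = vec.dim (emb ` B)"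
    by (rule vec.basis_exists)
  define S where "S = B \<inter> emb -` E"
  have ES: "emb ` S = E"
    using E(1) unfolding S_def by blast
  have inj: "inj_on emb S"
    using inj_of_int_vec unfolding emb_eq_of_int_vec by (rule inj_on_subset) simp
  have fin: "finite S"
    using finite_image_iff[OF inj] ES vec.finiteI_independent[OF E(2)] by simp
  have "int_independent S"
    using independent_of_int_vec_imp_int_independent[where 'a=complex, OF fin] E(2) ES
    by (simp add: emb_eq_of_int_vec)
  then have "card S \<le> int_rank B"
    unfolding int_rank_def
    by (intro cSup_upper bdd_above_card_int_independent) (auto simp: S_def)
  moreover have "card S = card E"
    using card_image[OF inj] ES by simp
  ultimately show ?thesis
    using E(4) by simp
qed

lemma span_emb_neq_UNIV:
  fixes B :: "(int^'r) set"
  assumes "int_rank B < CARD('r)"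
  shows "vec.span (emb ` B) \<noteq> UNIV"
proof
  assume "vec.span (emb ` B) = UNIV"
  then have "vec.dim (emb ` B) = vec.dim (UNIV :: (complex^'r) set)"
    by (metis vec.dim_span)
  also have "\<dots> = CARD('r)"
    by (rule vec_dim_card)
  finally show False
    using dim_emb_le_int_rank[of B] assms by simp
qed

definition linear_form :: "'a::semiring_1^'r \<Rightarrow> 'a^'r \<Rightarrow> 'a" where
  "linear_form c y = (\<Sum>i\<in>UNIV. c $ i * y $ i)"

lemma linear_form_0 [simp]: "linear_form c 0 = 0"
  by (simp add: linear_form_def)

lemma linear_form_add: "linear_form c (x + y) = linear_form c x + linear_form c y"
  by (simp add: linear_form_def distrib_left sum.distrib)

lemma linear_form_scale: "linear_form (c :: 'a::comm_semiring_1^'r) (a *s y) = a * linear_form c y"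
  by (simp add: linear_form_def sum_distrib_left algebra_simps)

lemma linear_form_axis: "linear_form c (axis i 1) = c $ i"
  unfolding linear_form_def axis_def by (simp add: if_distrib sum.delta cong: if_cong)

lemma linear_form_matrix_vector_mult:
  "linear_form c (A *v v) = (\<Sum>i\<in>UNIV. \<Sum>j\<in>UNIV. c $ i * A $ i $ j * v $ j)"
  by (simp add: linear_form_def matrix_vector_mult_def sum_distrib_left mult.assoc)

lemma exists_linear_form_vanishing:
  fixes S :: "('a::field^'r) set"
  assumes "vec.span S \<noteq> UNIV"
  obtains c where "c \<noteq> 0" and "\<And>s. s \<in> S \<Longrightarrow> linear_form c s = 0"
proof -
  obtain v where v: "v \<notin> vec.span S"
    using assms by blast
  obtain E where E: "E \<subseteq> S" "vec.independent E" "S \<subseteq> vec.span E"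
    using vec.basis_exists[of S] by metis
  have "v \<notin> vec.span E"
    using v E(1) vec.span_mono by blast
  then have "vec.independent (insert v E)"
    using E(2) by (rule vec.independent_insertI)
  then obtain g :: "'a^'r \<Rightarrow> 'a^'r" where g: "Vector_Spaces.linear (*s) (*s) g"
    and g_basis: "\<forall>x\<in>insert v E. g x = (if x = v then 1 else 0)"
    using vec.linear_independent_extend[of "insert v E" "\<lambda>x. if x = v then 1 else 0"] by blast
  \<comment> \<open>g maps v to the all-ones vector, so any coordinate of g will do\<close>
  define k :: 'r where "k = undefined"
  define c :: "'a^'r" where "c = (\<chi> i. g (axis i 1) $ k)"
  have c: "linear_form c y = g y $ k" for y
    using Cartesian_Space.linear_componentwise[OF g, of y k]
    by (simp add: linear_form_def c_def mult.commute)
  have g_E: "g x = 0" if "x \<in> E" for x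
  proof -
    have "x \<noteq> v"
      using that \<open>v \<notin> vec.span E\<close> vec.span_base by blast
    then show ?thesis
      using g_basis that by simp
  qed
  have "g x = 0" if "x \<in> vec.span E" for x
    by (rule vec.linear_eq_0_on_span[OF g g_E that])
  then have vanish: "linear_form c s = 0" if "s \<in> S" for s
    using E(3) that by (simp add: c subsetD)
  have "linear_form c v = 1"
    using c g_basis by simp
  then have "c \<noteq> 0"
    by (auto simp: linear_form_def)
  with vanish show ?thesis
    using that by blast
qed

lemma regfun_sum:
  assumes "finite S" and "\<And>s. s \<in> S \<Longrightarrow> f s \<in> regfun"
  shows "(\<lambda>M. \<Sum>s\<in>S. f s M) \<in> regfun"
  using assms by (induction S rule: finite_induct) (auto intro: regfun.intros)

lemma regfun_prod:
  assumes "finite S" and "\<And>s. s \<in> S \<Longrightarrow> f s \<in> regfun"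
  shows "(\<lambda>M. \<Prod>s\<in>S. f s M) \<in> regfun"
  using assms by (induction S rule: finite_induct) (auto intro: regfun.intros)

lemma zariski_closed_zero_set: "f \<in> regfun \<Longrightarrow> zariski_closed {M \<in> GL. f M = 0}"
  unfolding zariski_closed_def by (rule exI[of _ "{f}"]) auto

lemma regfun_vanishing_on_zariski_closure:
  assumes "D \<subseteq> GL" and "f \<in> regfun" and "\<And>d. d \<in> D \<Longrightarrow> f d = 0"
    and "g \<in> zariski_closure D"
  shows "f g = 0"
proof -
  have "zariski_closure D \<subseteq> {M \<in> GL. f M = 0}"
    unfolding zariski_closure_def using zariski_closed_zero_set[OF assms(2)] assms(1,3) by blast
  then show ?thesis
    using assms(4) by blast
qed

lemma irreducible_prod_vanishing:
  assumes "irreducible_variety G" and "G \<subseteq> GL"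
    and "finite X" and "\<And>x. x \<in> X \<Longrightarrow> \<phi> x \<in> regfun"
    and "\<And>g. g \<in> G \<Longrightarrow> (\<Prod>x\<in>X. \<phi> x g) = 0"
  shows "\<exists>x\<in>X. \<forall>g\<in>G. \<phi> x g = 0"
  using assms(3-5)
proof (induction X rule: finite_induct)
  case empty
  then show ?case
    using assms(1) by (auto simp: irreducible_variety_def)
next
  case (insert y X)
  let ?Z1 = "{M \<in> GL. \<phi> y M = 0}" and ?Z2 = "{M \<in> GL. (\<Prod>x\<in>X. \<phi> x M) = 0}"
  have "zariski_closed ?Z1"
    using insert.prems(1) by (intro zariski_closed_zero_set) simp
  moreover have "zariski_closed ?Z2"
    using insert.prems(1) insert.hyps(1) by (intro zariski_closed_zero_set regfun_prod) auto
  moreover have "G \<subseteq> ?Z1 \<union> ?Z2"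
    using insert.prems(2) insert.hyps assms(2) by auto
  ultimately have "G \<subseteq> ?Z1 \<or> G \<subseteq> ?Z2"
    using assms(1) unfolding irreducible_variety_def by blast
  then show ?case
    using insert.IH insert.prems(1) by blast
qed

lemma rational_rep_one:
  assumes "rational_rep G \<rho>" and "mat 1 \<in> G"
  shows "\<rho> (mat 1) = mat 1"
proof -
  let ?P = "\<rho> (mat 1)"
  have idem: "?P ** ?P = ?P"
    using assms unfolding rational_rep_def by (metis matrix_mul_lid)
  have "invertible ?P"
    using assms unfolding rational_rep_def GL_def by (simp add: invertible_det_nz)
  then obtain N where N: "N ** ?P = mat 1"
    unfolding invertible_def by blast
  have "?P = N ** (?P ** ?P)"
    using N by (simp add: matrix_mul_assoc)
  also have "\<dots> = mat 1"
    using idem N by simp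
  finally show ?thesis .
qed

lemma regfun_matrix_coefficient:
  assumes "rational_rep G \<rho>"
  obtains \<phi> where "\<And>v. \<phi> v \<in> regfun"
    and "\<And>v g. g \<in> G \<Longrightarrow> \<phi> v g = linear_form c (\<rho> g *v v)"
proof -
  obtain F where F: "\<And>i j. F i j \<in> regfun" "\<And>i j g. g \<in> G \<Longrightarrow> F i j g = \<rho> g $ i $ j"
    using assms unfolding rational_rep_def by metis
  show ?thesis
  proof
    show "(\<lambda>g. \<Sum>i\<in>UNIV. \<Sum>j\<in>UNIV. c $ i * F i j g * v $ j) \<in> regfun" for v
      by (intro regfun_sum regfun.rf_mult regfun.rf_const F) simp_all
    show "(\<Sum>i\<in>UNIV. \<Sum>j\<in>UNIV. c $ i * F i j g * v $ j) = linear_form c (\<rho> g *v v)" if "g \<in> G" for v g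
      using that by (simp add: linear_form_matrix_vector_mult F)
  qed
qed

lemma rational_rep_maps_into_inverse:
  assumes "matrix_subgroup D" and "D \<subseteq> G" and "rational_rep G \<rho>"
    and "\<forall>g\<in>D. \<exists>y\<in>Y. \<rho> g *v y \<in> Z" and "h \<in> D"
  shows "\<exists>z\<in>Z. \<rho> h *v z \<in> Y"
proof -
  obtain g where g: "g \<in> D" "h ** g = mat 1"
    using assms(1,5) unfolding matrix_subgroup_def by blast
  obtain y where y: "y \<in> Y" "\<rho> g *v y \<in> Z"
    using assms(4) g(1) by blast
  have one: "mat 1 \<in> G"
    using assms(1,2) unfolding matrix_subgroup_def by blast
  have "\<rho> h *v (\<rho> g *v y) = \<rho> (h ** g) *v y"
    using assms(2,3,5) g(1) unfolding rational_rep_def by (simp add: matrix_vector_mul_assoc subsetD)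
  also have "\<dots> = y"
    using g(2) rational_rep_one[OF assms(3) one] by simp
  finally show ?thesis
    using y by (intro bexI[of _ "\<rho> g *v y"]) simp_all
qed

lemma frakX_orbit_not_annihilated:
  assumes "matrix_subgroup G" and "rational_rep G \<rho>" and "x \<in> frakX G \<rho>"
    and "\<And>h. h \<in> G \<Longrightarrow> linear_form c (\<rho> h *v emb x) = 0"
  shows "c = 0"
proof -
  define U where "U = {w. \<forall>h\<in>G. linear_form c (\<rho> h *v w) = 0}"
  have "csubspace U"
    unfolding csubspace_def U_def
    by (simp add: linear_form_add linear_form_scale matrix_vector_right_distrib vector_scalar_commute)
  moreover have "\<rho> g *v w \<in> U" if g: "g \<in> G" and w: "w \<in> U" for g w
  proof -
    have "\<rho> h *v (\<rho> g *v w) = \<rho> (h ** g) *v w" and "h ** g \<in> G" if "h \<in> G" for h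
      using assms(1,2) g that unfolding rational_rep_def matrix_subgroup_def
      by (simp_all add: matrix_vector_mul_assoc)
    then show ?thesis
      using w unfolding U_def by simp
  qed
  moreover have "emb x \<in> U"
    using assms(4) by (simp add: U_def)
  ultimately have "U = UNIV"
    using assms(3) unfolding frakX_def by blast
  moreover have one: "mat 1 \<in> G"
    using assms(1) unfolding matrix_subgroup_def by blast
  ultimately have "linear_form c (\<rho> (mat 1) *v axis i 1) = 0" for i
    unfolding U_def by blast
  then have "c $ i = 0" for i
    by (simp add: rational_rep_one[OF assms(2) one] linear_form_axis)
  then show "c = 0"
    by (simp add: vec_eq_iff)
qed

lemma not_displaced_imp_orbit_annihilated:
  assumes "irreducible_variety G" and "G \<subseteq> GL" and "rational_rep G \<rho>"
    and "matrix_subgroup D" and "D \<subseteq> G" and "zariski_closure D = G"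
    and "finite X" and "\<forall>g\<in>D. \<exists>y\<in>Y. \<rho> g *v y \<in> X"
    and "\<And>y. y \<in> Y \<Longrightarrow> linear_form c y = 0"
  shows "\<exists>x\<in>X. \<forall>g\<in>G. linear_form c (\<rho> g *v x) = 0"
proof -
  obtain \<phi> where \<phi>: "\<And>v. \<phi> v \<in> regfun" "\<And>v g. g \<in> G \<Longrightarrow> \<phi> v g = linear_form c (\<rho> g *v v)"
    using regfun_matrix_coefficient[OF assms(3)] by blast
  have "(\<Prod>x\<in>X. \<phi> x h) = 0" if hD: "h \<in> D" for h
  proof (rule prod_zero[OF assms(7)])
    obtain x where x: "x \<in> X" "\<rho> h *v x \<in> Y"
      using rational_rep_maps_into_inverse[OF assms(4,5,3,8) hD] by blast
    have "h \<in> G"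
      using hD assms(5) by blast
    then have "\<phi> x h = 0"
      using \<phi>(2) assms(9) x(2) by simp
    then show "\<exists>x\<in>X. \<phi> x h = 0"
      using x(1) by blast
  qed
  moreover have "D \<subseteq> GL"
    using assms(4) unfolding matrix_subgroup_def by blast
  moreover have "(\<lambda>g. \<Prod>x\<in>X. \<phi> x g) \<in> regfun"
    by (rule regfun_prod[OF assms(7) \<phi>(1)])
  ultimately have "(\<Prod>x\<in>X. \<phi> x g) = 0" if "g \<in> G" for g
    using regfun_vanishing_on_zariski_closure that assms(6) by blast
  then obtain x where "x \<in> X" "\<forall>g\<in>G. \<phi> x g = 0"
    using irreducible_prod_vanishing[OF assms(1,2,7), of \<phi>] \<phi>(1) by blast
  then show ?thesis
    using \<phi>(2) by auto
qed

theorem proposition4p1: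
  fixes G D :: "(complex^'n^'n) set"
    and \<rho> :: "complex^'n^'n \<Rightarrow> complex^'r^'r"
  assumes "algebraic_group G"
    and "irreducible_variety G"
    and "matrix_subgroup D" and "D \<subseteq> G"
    and "zariski_closure D = G"
    and "rational_rep G \<rho>"
    and "\<forall>d\<in>D. \<forall>i j. \<rho> d $ i $ j \<in> \<int>"
  shows "subgroup_displacement D \<rho> (frakX G \<rho>)"
  unfolding subgroup_displacement_def
proof (intro allI impI)
  fix B X :: "(int^'r) set"
  assume rank: "int_rank B < CARD('r)" and fin: "finite X" and X: "X \<subseteq> frakX G \<rho>"
  have G_subgroup: "matrix_subgroup G"
    using assms(1) unfolding algebraic_group_def by blast
  then have G_GL: "G \<subseteq> GL"
    unfolding matrix_subgroup_def by blast
  obtain c where "c \<noteq> 0" and c: "\<And>y. y \<in> emb ` B \<Longrightarrow> linear_form c y = 0"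
    using exists_linear_form_vanishing[OF span_emb_neq_UNIV[OF rank]] by blast
  show "\<exists>g\<in>D. \<forall>b\<in>B. \<forall>x\<in>X. \<rho> g *v emb b \<noteq> emb x"
  proof (rule ccontr)
    assume "\<not> ?thesis"
    then have "\<forall>g\<in>D. \<exists>y\<in>emb ` B. \<rho> g *v y \<in> emb ` X"
      by blast
    then obtain x where "x \<in> X" "\<forall>g\<in>G. linear_form c (\<rho> g *v emb x) = 0"
      using not_displaced_imp_orbit_annihilated[OF assms(2) G_GL assms(6,3,4,5) finite_imageI[OF fin]] c
      by blast
    then have "c = 0"
      using frakX_orbit_not_annihilated[OF G_subgroup assms(6)] X by blast
    with \<open>c \<noteq> 0\<close> show False
      by contradiction
  qed
qed

end
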